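(* Let $(\Omega,\mathcal F,\mathbb P)$ be a probability space and $u:\Omega\times\mathbb R\to\mathbb R$ satisfy: (i) for every $\omega$, $u(\omega,\cdot)$ is right continuous with left limits, nondecreasing, and $u(\omega,0)=0$; (ii) $u(\cdot,x)\in\mathcal L^1(\Omega,\mathcal F,\mathbb P)$ for every $x\in\mathbb R$; (iii) the functional $T_u(f):=\int_\Omega u(\omega,f(\omega))\,\mathbb P(d\omega)$ on $\mathcal L^\infty(\Omega,\mathcal F)$ is continuous from below, i.e. $T_u(f_n)\to T_u(f)$ whenever $f_n\in\mathcal L^\infty(\Omega,\mathcal F)$ and $f_n(\omega)\uparrow f(\omega)$ for every $\omega$, with $f\in\mathcal L^\infty(\Omega,\mathcal F)$. Then $A_{\mathrm{cont}}:=\{\omega\in\Omega: x\mapsto u(\omega,x)\text{ is continuous on }\mathbb R\}\in\mathcal F$ and $\mathbb P(A_{\mathrm{cont}})=1$.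
   Context: $\mathcal L^\infty(\Omega,\mathcal F)$: bounded $\mathcal F$-measurable real functions. *)

theory Defs
  imports "HOL-Probability.Probability"
begin

definition Linfty :: "'a measure \<Rightarrow> ('a \<Rightarrow> real) set" where
  "Linfty M = {f. f \<in> borel_measurable M \<and> (\<exists>C. \<forall>\<omega>\<in>space M. \<bar>f \<omega>\<bar> \<le> C)}"

definition T_u :: "'a measure \<Rightarrow> ('a \<Rightarrow> real \<Rightarrow> real) \<Rightarrow> ('a \<Rightarrow> real) \<Rightarrow> real" where
  "T_u M u f = (\<integral>\<omega>. u \<omega> (f \<omega>) \<partial>M)"

end

theory Submission
  imports Defs
begin

text \<open>A discontinuity of the monotone function \<open>u \<omega>\<close> is a jump across some rational level \<open>c\<close>
inside some interval \<open>(-N, N)\<close>, and it is located by the first point where \<open>u \<omega>\<close> reaches \<open>c\<close>.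
This crossing point depends measurably on \<open>\<omega>\<close> and is bounded, so continuity from below of
\<open>T_u\<close> along the crossing point approached from the left, together with dominated convergence,
shows that almost surely the left limit of \<open>u \<omega>\<close> at the crossing point equals the value there.
Intersecting over the countably many pairs \<open>(c, N)\<close> gives continuity almost surely.\<close>

lemma filterlim_minus_inverse_Suc_at_left:
  "filterlim (\<lambda>n. x - 1 / real (Suc n)) (at_left (x::real)) sequentially"
proof -
  have "(\<lambda>n. x - inverse (real (Suc n))) \<longlonglongrightarrow> x - 0"
    by (intro tendsto_diff tendsto_const LIMSEQ_inverse_real_of_nat)
  then show ?thesis
    unfolding filterlim_at by (simp add: inverse_eq_divide)
qed

lemma abs_le_of_mono_between:
  fixes v :: "'a::linorder \<Rightarrow> real"
  assumes "mono v" "a \<le> x" "x \<le> b"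
  shows "\<bar>v x\<bar> \<le> \<bar>v a\<bar> + \<bar>v b\<bar>"
  using assms monoD[of v a x] monoD[of v x b] by linarith

lemma tendsto_at_left_le_mono:
  fixes v :: "real \<Rightarrow> real"
  assumes mono: "mono v" and l: "(v \<longlongrightarrow> l) (at_left x)"
  shows "l \<le> v x"
proof -
  have "eventually (\<lambda>y. y < x) (at_left x)"
    by (simp add: eventually_at_filter)
  then have "eventually (\<lambda>y. v y \<le> v x) (at_left x)"
    by eventually_elim (use mono in \<open>simp add: monoD\<close>)
  then show "l \<le> v x"
    by (rule tendsto_upperbound[OF l]) simp
qed

lemma AE_eq_of_le_of_integral_eq:
  fixes f g :: "'a \<Rightarrow> real"
  assumes "integrable M f" "integrable M g"
    and "\<And>\<omega>. \<omega> \<in> space M \<Longrightarrow> f \<omega> \<le> g \<omega>"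
    and "integral\<^sup>L M f = integral\<^sup>L M g"
  shows "AE \<omega> in M. f \<omega> = g \<omega>"
proof -
  have "integral\<^sup>L M (\<lambda>\<omega>. g \<omega> - f \<omega>) = 0"
    using assms by simp
  then have "AE \<omega> in M. g \<omega> - f \<omega> = 0"
    by (subst integral_nonneg_eq_0_iff_AE[symmetric]) (use assms in \<open>auto intro!: AE_I2\<close>)
  then show ?thesis by eventually_elim simp
qed

text \<open>The approximations \<open>(\<lfloor>2^k h\<rfloor> + 1) / 2^k\<close> converge to \<open>h\<close> strictly from the right
and take only countably many values.\<close>

lemma borel_measurable_compose_right_continuous:
  fixes u :: "'a \<Rightarrow> real \<Rightarrow> real"
  assumes rc: "\<And>\<omega> x. \<omega> \<in> space M \<Longrightarrow> continuous (at_right x) (u \<omega>)"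
    and um: "\<And>x. (\<lambda>\<omega>. u \<omega> x) \<in> borel_measurable M"
    and h: "h \<in> borel_measurable M"
  shows "(\<lambda>\<omega>. u \<omega> (h \<omega>)) \<in> borel_measurable M"
proof (rule borel_measurable_LIMSEQ_real)
  define hk where "hk k \<omega> = (real_of_int \<lfloor>2^k * h \<omega>\<rfloor> + 1) / 2^k" for k :: nat and \<omega>
  show "(\<lambda>\<omega>. u \<omega> (hk k \<omega>)) \<in> borel_measurable M" for k
    unfolding hk_def
    by (rule measurable_compose_countable[where f="\<lambda>i \<omega>. u \<omega> ((real_of_int i + 1) / 2^k)"])
      (use um in auto, use h in measurable)
  show "(\<lambda>k. u \<omega> (hk k \<omega>)) \<longlonglongrightarrow> u \<omega> (h \<omega>)" if \<omega>: "\<omega> \<in> space M" for \<omega>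
  proof -
    have gt: "h \<omega> < hk k \<omega>" and le: "hk k \<omega> \<le> h \<omega> + 1 / 2^k" for k
    proof -
      have "2^k * h \<omega> < real_of_int \<lfloor>2^k * h \<omega>\<rfloor> + 1"
        and "real_of_int \<lfloor>2^k * h \<omega>\<rfloor> + 1 \<le> 2^k * h \<omega> + 1" by linarith+
      then show "h \<omega> < hk k \<omega>" "hk k \<omega> \<le> h \<omega> + 1 / 2^k"
        unfolding hk_def by (simp_all add: field_simps)
    qed
    have "(\<lambda>k. h \<omega> + 1 / (2::real)^k) \<longlonglongrightarrow> h \<omega> + 0"
      by (intro tendsto_add tendsto_const LIMSEQ_divide_realpow_zero) auto
    then have upper: "(\<lambda>k. h \<omega> + 1 / (2::real)^k) \<longlonglongrightarrow> h \<omega>"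
      by simp
    have "(\<lambda>k. hk k \<omega>) \<longlonglongrightarrow> h \<omega>"
      by (rule tendsto_sandwich[OF _ _ tendsto_const upper]) (auto intro: always_eventually less_imp_le gt le)
    moreover have "\<forall>\<^sub>F k in sequentially. hk k \<omega> \<in> {h \<omega><..} \<and> hk k \<omega> \<noteq> h \<omega>"
      by (intro always_eventually allI) (metis gt greaterThan_iff order_less_irrefl)
    ultimately have "filterlim (\<lambda>k. hk k \<omega>) (at_right (h \<omega>)) sequentially"
      unfolding filterlim_at by blast
    moreover have "(u \<omega> \<longlongrightarrow> u \<omega> (h \<omega>)) (at_right (h \<omega>))"
      using rc[OF \<omega>] by (simp add: continuous_within)
    ultimately show ?thesis by (rule filterlim_compose[rotated])
  qed
qed

lemma integrable_compose_bounded: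
  fixes u :: "'a \<Rightarrow> real \<Rightarrow> real"
  assumes rc: "\<And>\<omega> x. \<omega> \<in> space M \<Longrightarrow> continuous (at_right x) (u \<omega>)"
    and mono: "\<And>\<omega>. \<omega> \<in> space M \<Longrightarrow> mono (u \<omega>)"
    and integ: "\<And>x. integrable M (\<lambda>\<omega>. u \<omega> x)"
    and f: "f \<in> borel_measurable M" "\<And>\<omega>. \<omega> \<in> space M \<Longrightarrow> \<bar>f \<omega>\<bar> \<le> C"
  shows "integrable M (\<lambda>\<omega>. u \<omega> (f \<omega>))"
proof (rule Bochner_Integration.integrable_bound)
  show "integrable M (\<lambda>\<omega>. \<bar>u \<omega> (- C)\<bar> + \<bar>u \<omega> C\<bar>)"
    using integ by auto
  show "(\<lambda>\<omega>. u \<omega> (f \<omega>)) \<in> borel_measurable M"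
    by (rule borel_measurable_compose_right_continuous[OF rc _ f(1)]) (use integ in auto)
  show "AE \<omega> in M. norm (u \<omega> (f \<omega>)) \<le> norm (\<bar>u \<omega> (- C)\<bar> + \<bar>u \<omega> C\<bar>)"
  proof (rule AE_I2)
    fix \<omega> assume \<omega>: "\<omega> \<in> space M"
    have "\<bar>u \<omega> (f \<omega>)\<bar> \<le> \<bar>u \<omega> (- C)\<bar> + \<bar>u \<omega> C\<bar>"
      using f(2)[OF \<omega>] by (intro abs_le_of_mono_between[OF mono[OF \<omega>]]) linarith+
    then show "norm (u \<omega> (f \<omega>)) \<le> norm (\<bar>u \<omega> (- C)\<bar> + \<bar>u \<omega> C\<bar>)"
      by simp
  qed
qed

text \<open>A sequential left limit, so that it is a measurable function of the parameters; it agrees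
with the left limit wherever that exists.\<close>

definition left_limit :: "(real \<Rightarrow> real) \<Rightarrow> real \<Rightarrow> real" where
  "left_limit v x = lim (\<lambda>n. v (x - 1 / real (Suc n)))"

lemma tendsto_left_limit:
  assumes "(v \<longlongrightarrow> l) (at_left x)"
  shows "(\<lambda>n. v (x - 1 / real (Suc n))) \<longlonglongrightarrow> l"
  using assms filterlim_minus_inverse_Suc_at_left by (rule filterlim_compose)

lemma left_limit_eq:
  assumes "(v \<longlongrightarrow> l) (at_left x)"
  shows "left_limit v x = l"
  unfolding left_limit_def using tendsto_left_limit[OF assms] by (rule limI)

lemma borel_measurable_left_limit_compose:
  fixes u :: "'a \<Rightarrow> real \<Rightarrow> real"
  assumes "\<And>\<omega> x. \<omega> \<in> space M \<Longrightarrow> continuous (at_right x) (u \<omega>)"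
    and "\<And>x. (\<lambda>\<omega>. u \<omega> x) \<in> borel_measurable M"
    and [measurable]: "h \<in> borel_measurable M"
  shows "(\<lambda>\<omega>. left_limit (u \<omega>) (h \<omega>)) \<in> borel_measurable M"
proof -
  have [measurable]: "(\<lambda>\<omega>. u \<omega> (h \<omega> - 1 / real (Suc n))) \<in> borel_measurable M" for n
    by (rule borel_measurable_compose_right_continuous[OF assms(1,2)]) measurable
  show ?thesis unfolding left_limit_def by measurable
qed

lemma left_limit_compose_dominated_convergence:
  fixes u :: "'a \<Rightarrow> real \<Rightarrow> real"
  assumes rc: "\<And>\<omega> x. \<omega> \<in> space M \<Longrightarrow> continuous (at_right x) (u \<omega>)"
    and left: "\<And>\<omega> x. \<omega> \<in> space M \<Longrightarrow> \<exists>l. (u \<omega> \<longlongrightarrow> l) (at_left x)"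
    and mono: "\<And>\<omega>. \<omega> \<in> space M \<Longrightarrow> mono (u \<omega>)"
    and integ: "\<And>x. integrable M (\<lambda>\<omega>. u \<omega> x)"
    and f: "f \<in> borel_measurable M" "\<And>\<omega>. \<omega> \<in> space M \<Longrightarrow> \<bar>f \<omega>\<bar> \<le> C"
  shows "integrable M (\<lambda>\<omega>. left_limit (u \<omega>) (f \<omega>))"
    and "(\<lambda>n. \<integral>\<omega>. u \<omega> (f \<omega> - 1 / real (Suc n)) \<partial>M) \<longlonglongrightarrow> (\<integral>\<omega>. left_limit (u \<omega>) (f \<omega>) \<partial>M)"
proof -
  have um: "(\<lambda>\<omega>. u \<omega> x) \<in> borel_measurable M" for x
    using integ by auto
  have seq_meas: "(\<lambda>\<omega>. u \<omega> (f \<omega> - 1 / real (Suc n))) \<in> borel_measurable M" for n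
    by (rule borel_measurable_compose_right_continuous[OF rc um]) (use f in measurable)
  have lim_meas: "(\<lambda>\<omega>. left_limit (u \<omega>) (f \<omega>)) \<in> borel_measurable M"
    by (rule borel_measurable_left_limit_compose[OF rc um f(1)])
  define w where "w \<omega> = \<bar>u \<omega> (- C - 1)\<bar> + \<bar>u \<omega> C\<bar>" for \<omega>
  have w: "integrable M w"
    unfolding w_def using integ by auto
  have dom: "AE \<omega> in M. norm (u \<omega> (f \<omega> - 1 / real (Suc n))) \<le> w \<omega>" for n
  proof (rule AE_I2)
    fix \<omega> assume \<omega>: "\<omega> \<in> space M"
    have "0 \<le> 1 / real (Suc n)" "1 / real (Suc n) \<le> 1"
      by (auto simp: field_simps)
    then show "norm (u \<omega> (f \<omega> - 1 / real (Suc n))) \<le> w \<omega>"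
      unfolding w_def real_norm_def using f(2)[OF \<omega>]
      by (intro abs_le_of_mono_between[OF mono[OF \<omega>]]) linarith+
  qed
  have lim: "AE \<omega> in M. (\<lambda>n. u \<omega> (f \<omega> - 1 / real (Suc n))) \<longlonglongrightarrow> left_limit (u \<omega>) (f \<omega>)"
  proof (rule AE_I2)
    fix \<omega> assume "\<omega> \<in> space M"
    then obtain l where l: "(u \<omega> \<longlongrightarrow> l) (at_left (f \<omega>))"
      using left by blast
    show "(\<lambda>n. u \<omega> (f \<omega> - 1 / real (Suc n))) \<longlonglongrightarrow> left_limit (u \<omega>) (f \<omega>)"
      unfolding left_limit_eq[OF l] by (rule tendsto_left_limit[OF l])
  qed
  show "integrable M (\<lambda>\<omega>. left_limit (u \<omega>) (f \<omega>))"
    by (rule integrable_dominated_convergence[OF lim_meas seq_meas w lim dom])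
  show "(\<lambda>n. \<integral>\<omega>. u \<omega> (f \<omega> - 1 / real (Suc n)) \<partial>M) \<longlonglongrightarrow> (\<integral>\<omega>. left_limit (u \<omega>) (f \<omega>) \<partial>M)"
    by (rule integral_dominated_convergence[OF lim_meas seq_meas w lim dom])
qed

text \<open>Continuity from below, applied to \<open>f - 1/(n+1) \<up> f\<close>, forces the left limit of \<open>u \<omega>\<close>
at \<open>f \<omega>\<close>, which never exceeds \<open>u \<omega> (f \<omega>)\<close>, to have the same integral as \<open>u \<omega> (f \<omega>)\<close>.\<close>

lemma AE_left_limit_compose_eq:
  fixes u :: "'a \<Rightarrow> real \<Rightarrow> real"
  assumes rc: "\<And>\<omega> x. \<omega> \<in> space M \<Longrightarrow> continuous (at_right x) (u \<omega>)"
    and left: "\<And>\<omega> x. \<omega> \<in> space M \<Longrightarrow> \<exists>l. (u \<omega> \<longlongrightarrow> l) (at_left x)"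
    and mono: "\<And>\<omega>. \<omega> \<in> space M \<Longrightarrow> mono (u \<omega>)"
    and integ: "\<And>x. integrable M (\<lambda>\<omega>. u \<omega> x)"
    and cont_below: "\<And>fs f. (\<And>n. fs n \<in> Linfty M) \<Longrightarrow> f \<in> Linfty M \<Longrightarrow>
        (\<And>\<omega>. \<omega> \<in> space M \<Longrightarrow> incseq (\<lambda>n. fs n \<omega>)) \<Longrightarrow>
        (\<And>\<omega>. \<omega> \<in> space M \<Longrightarrow> (\<lambda>n. fs n \<omega>) \<longlonglongrightarrow> f \<omega>) \<Longrightarrow>
        (\<lambda>n. T_u M u (fs n)) \<longlonglongrightarrow> T_u M u f"
    and f: "f \<in> Linfty M"
  shows "AE \<omega> in M. left_limit (u \<omega>) (f \<omega>) = u \<omega> (f \<omega>)"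
proof -
  obtain C where fm: "f \<in> borel_measurable M" and fC: "\<And>\<omega>. \<omega> \<in> space M \<Longrightarrow> \<bar>f \<omega>\<bar> \<le> C"
    using f unfolding Linfty_def by blast
  define fs where "fs n \<omega> = f \<omega> - 1 / real (Suc n)" for n \<omega>
  have fs: "fs n \<in> Linfty M" for n
  proof -
    have "\<bar>fs n \<omega>\<bar> \<le> C + 1" if "\<omega> \<in> space M" for \<omega>
    proof -
      have "0 \<le> 1 / real (Suc n)" "1 / real (Suc n) \<le> 1"
        by (auto simp: field_simps)
      then show ?thesis using fC[OF that] unfolding fs_def by linarith
    qed
    moreover have "fs n \<in> borel_measurable M"
      unfolding fs_def using fm by measurable
    ultimately show ?thesis unfolding Linfty_def by blast
  qed
  have "incseq (\<lambda>n. fs n \<omega>)" for \<omega>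
    by (rule incseq_SucI) (simp add: fs_def frac_le)
  moreover have "(\<lambda>n. fs n \<omega>) \<longlonglongrightarrow> f \<omega>" for \<omega>
    using filterlim_minus_inverse_Suc_at_left unfolding fs_def filterlim_at by blast
  ultimately have "(\<lambda>n. T_u M u (fs n)) \<longlonglongrightarrow> T_u M u f"
    by (rule cont_below[OF fs f])
  then have "(\<lambda>n. \<integral>\<omega>. u \<omega> (f \<omega> - 1 / real (Suc n)) \<partial>M) \<longlonglongrightarrow> (\<integral>\<omega>. u \<omega> (f \<omega>) \<partial>M)"
    unfolding T_u_def fs_def .
  with left_limit_compose_dominated_convergence(2)[OF rc left mono integ fm fC]
  have "(\<integral>\<omega>. left_limit (u \<omega>) (f \<omega>) \<partial>M) = (\<integral>\<omega>. u \<omega> (f \<omega>) \<partial>M)"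
    by (rule LIMSEQ_unique)
  moreover have "integrable M (\<lambda>\<omega>. u \<omega> (f \<omega>))"
    by (rule integrable_compose_bounded[OF rc mono integ fm fC])
  moreover have "left_limit (u \<omega>) (f \<omega>) \<le> u \<omega> (f \<omega>)" if \<omega>: "\<omega> \<in> space M" for \<omega>
  proof -
    obtain l where l: "(u \<omega> \<longlongrightarrow> l) (at_left (f \<omega>))"
      using left[OF \<omega>] by blast
    show ?thesis
      unfolding left_limit_eq[OF l] using mono[OF \<omega>] l by (rule tendsto_at_left_le_mono)
  qed
  ultimately show ?thesis
    by (intro AE_eq_of_le_of_integral_eq
        left_limit_compose_dominated_convergence(1)[OF rc left mono integ fm fC])
qed

definition level_crossing :: "(real \<Rightarrow> real) \<Rightarrow> real \<Rightarrow> real \<Rightarrow> real" where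
  "level_crossing v c N = Inf {x. - N \<le> x \<and> (c \<le> v x \<or> N \<le> x)}"

lemma level_crossing_mem:
  fixes v :: "real \<Rightarrow> real"
  assumes mono: "mono v" and rc: "\<And>x. continuous (at_right x) v" and N: "0 \<le> N"
  shows "level_crossing v c N \<in> {x. - N \<le> x \<and> (c \<le> v x \<or> N \<le> x)}"
    and "level_crossing v c N \<le> N"
proof -
  let ?S = "{x. - N \<le> x \<and> (c \<le> v x \<or> N \<le> x)}"
  let ?F = "level_crossing v c N"
  have NS: "N \<in> ?S" using N by auto
  have bdd: "bdd_below ?S" by (rule bdd_belowI[of _ "-N"]) auto
  show le: "?F \<le> N" unfolding level_crossing_def by (rule cInf_lower[OF NS bdd])
  have ge: "- N \<le> ?F" unfolding level_crossing_def by (rule cInf_greatest; use NS in blast)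
  show "?F \<in> ?S"
  proof (cases "?F = N")
    case True then show ?thesis using NS by simp
  next
    case False
    with le have lt: "?F < N" by simp
    have "c \<le> v y" if "?F < y" "y < N" for y
    proof -
      obtain s where s: "s \<in> ?S" "s < y"
        using \<open>?F < y\<close> cInf_less_iff[OF _ bdd] NS unfolding level_crossing_def by blast
      then have "c \<le> v s" using \<open>y < N\<close> by auto
      also have "v s \<le> v y" using mono s(2) by (simp add: monoD)
      finally show ?thesis .
    qed
    then have ev: "eventually (\<lambda>y. c \<le> v y) (at_right ?F)"
      unfolding eventually_at_right[OF lt] using lt by blast
    have "(v \<longlongrightarrow> v ?F) (at_right ?F)"
      using rc[of ?F] by (simp add: continuous_within)
    then have "c \<le> v ?F"
      by (rule tendsto_lowerbound[OF _ ev]) simp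
    then show ?thesis using ge by simp
  qed
qed

lemma level_crossing_le_iff:
  fixes v :: "real \<Rightarrow> real"
  assumes mono: "mono v" and rc: "\<And>x. continuous (at_right x) v" and N: "0 \<le> N"
  shows "level_crossing v c N \<le> t \<longleftrightarrow> N \<le> t \<or> (- N \<le> t \<and> c \<le> v t)"
proof
  let ?F = "level_crossing v c N"
  assume "?F \<le> t"
  moreover have "v ?F \<le> v t" if "?F \<le> t"
    using mono that by (rule monoD)
  ultimately show "N \<le> t \<or> (- N \<le> t \<and> c \<le> v t)"
    using level_crossing_mem(1)[OF mono rc N, of c] by auto
next
  let ?S = "{x. - N \<le> x \<and> (c \<le> v x \<or> N \<le> x)}"
  assume "N \<le> t \<or> (- N \<le> t \<and> c \<le> v t)"
  then have "t \<in> ?S" using N by auto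
  moreover have "bdd_below ?S" by (rule bdd_belowI[of _ "-N"]) auto
  ultimately show "level_crossing v c N \<le> t"
    unfolding level_crossing_def by (rule cInf_lower)
qed

lemma level_crossing_at_jump:
  fixes v :: "real \<Rightarrow> real"
  assumes mono: "mono v" and rc: "\<And>x. continuous (at_right x) v" and N: "0 \<le> N"
    and x: "- N < x" "x < N"
    and l: "(v \<longlongrightarrow> l) (at_left x)" "l < c" "c < v x"
  shows "level_crossing v c N = x"
proof (rule antisym)
  let ?F = "level_crossing v c N"
  show "?F \<le> x"
    using level_crossing_le_iff[OF mono rc N] x l by auto
  show "x \<le> ?F"
  proof (rule ccontr)
    assume "\<not> x \<le> ?F"
    then have lt: "?F < x" by simp
    then have "c \<le> v ?F"
      using level_crossing_mem(1)[OF mono rc N, of c] x by auto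
    moreover have "eventually (\<lambda>y. v ?F \<le> v y) (at_left x)"
      unfolding eventually_at_left[OF lt]
      by (intro exI[of _ ?F] conjI lt allI impI) (use mono in \<open>auto simp: mono_def\<close>)
    then have "v ?F \<le> l"
      by (rule tendsto_lowerbound[OF l(1)]) simp
    ultimately show False using l by simp
  qed
qed

lemma borel_measurable_level_crossing:
  fixes u :: "'a \<Rightarrow> real \<Rightarrow> real"
  assumes mono: "\<And>\<omega>. \<omega> \<in> space M \<Longrightarrow> mono (u \<omega>)"
    and rc: "\<And>\<omega> x. \<omega> \<in> space M \<Longrightarrow> continuous (at_right x) (u \<omega>)"
    and um[measurable]: "\<And>x. (\<lambda>\<omega>. u \<omega> x) \<in> borel_measurable M"
    and N: "0 \<le> N"
  shows "(\<lambda>\<omega>. level_crossing (u \<omega>) c N) \<in> borel_measurable M"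
proof (subst borel_measurable_iff_le, intro allI)
  fix t
  have "{\<omega> \<in> space M. level_crossing (u \<omega>) c N \<le> t}
      = {\<omega> \<in> space M. N \<le> t \<or> (- N \<le> t \<and> c \<le> u \<omega> t)}"
    using level_crossing_le_iff[OF mono rc N] by auto
  also have "\<dots> \<in> sets M" by measurable
  finally show "{\<omega> \<in> space M. level_crossing (u \<omega>) c N \<le> t} \<in> sets M" .
qed

lemma level_crossing_in_Linfty:
  fixes u :: "'a \<Rightarrow> real \<Rightarrow> real"
  assumes mono: "\<And>\<omega>. \<omega> \<in> space M \<Longrightarrow> mono (u \<omega>)"
    and rc: "\<And>\<omega> x. \<omega> \<in> space M \<Longrightarrow> continuous (at_right x) (u \<omega>)"
    and um: "\<And>x. (\<lambda>\<omega>. u \<omega> x) \<in> borel_measurable M"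
    and N: "0 \<le> N"
  shows "(\<lambda>\<omega>. level_crossing (u \<omega>) c N) \<in> Linfty M"
proof -
  have "\<bar>level_crossing (u \<omega>) c N\<bar> \<le> N" if "\<omega> \<in> space M" for \<omega>
    using level_crossing_mem[OF mono[OF that] rc[OF that] N, of c] by auto
  then show ?thesis
    unfolding Linfty_def using borel_measurable_level_crossing[OF mono rc um N] by blast
qed

lemma left_limit_less_if_discontinuous:
  fixes v :: "real \<Rightarrow> real"
  assumes mono: "mono v" and rc: "continuous (at_right x) v"
    and l: "(v \<longlongrightarrow> l) (at_left x)" and nc: "\<not> isCont v x"
  shows "l < v x"
proof -
  have "\<not> continuous (at_left x) v"
    using nc rc continuous_at_split by blast
  then have "l \<noteq> v x"
    using l by (auto simp: continuous_within)
  moreover have "l \<le> v x"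
    using mono l by (rule tendsto_at_left_le_mono)
  ultimately show ?thesis by simp
qed

text \<open>A monotone function with left limits that is right continuous can only jump upwards; a jump
at \<open>x\<close> across a rational level \<open>c\<close> is detected at \<open>level_crossing v c N\<close> for \<open>N > \<bar>x\<bar>\<close>.\<close>

lemma continuous_on_UNIV_iff_left_limit_at_level_crossings:
  fixes v :: "real \<Rightarrow> real"
  assumes mono: "mono v" and rc: "\<And>x. continuous (at_right x) v"
    and left: "\<And>x. \<exists>l. (v \<longlongrightarrow> l) (at_left x)"
  shows "continuous_on UNIV v \<longleftrightarrow>
    (\<forall>q N. left_limit v (level_crossing v (of_rat q) (real N))
           = v (level_crossing v (of_rat q) (real N)))"
proof
  assume "continuous_on UNIV v"
  then have "(v \<longlongrightarrow> v x) (at_left x)" for x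
    by (simp add: continuous_on_eq_continuous_at isCont_def filterlim_at_split)
  then show "\<forall>q N. left_limit v (level_crossing v (of_rat q) (real N))
      = v (level_crossing v (of_rat q) (real N))"
    by (simp add: left_limit_eq)
next
  assume crossings: "\<forall>q N. left_limit v (level_crossing v (of_rat q) (real N))
      = v (level_crossing v (of_rat q) (real N))"
  show "continuous_on UNIV v"
    unfolding continuous_on_eq_continuous_at[OF open_UNIV]
  proof (intro ballI, rule ccontr)
    fix x assume nc: "\<not> isCont v x"
    obtain l where l: "(v \<longlongrightarrow> l) (at_left x)"
      using left by blast
    have "l < v x"
      using left_limit_less_if_discontinuous[OF mono rc l nc] .
    then obtain c where c: "c \<in> \<rat>" "l < c" "c < v x"
      using Rats_dense_in_real by blast
    then obtain q where q: "c = of_rat q"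
      by (auto elim: Rats_cases)
    obtain N where N: "\<bar>x\<bar> < real N"
      using reals_Archimedean2 by blast
    have "level_crossing v (of_rat q) (real N) = x"
      by (rule level_crossing_at_jump[OF mono rc _ _ _ l]) (use N c q in auto)
    with crossings have "left_limit v x = v x"
      by metis
    then show False
      using left_limit_eq[OF l] \<open>l < v x\<close> by simp
  qed
qed

theorem mainTheorem14:
  fixes M :: "'a measure" and u :: "'a \<Rightarrow> real \<Rightarrow> real"
  assumes "prob_space M"
    and rcll: "\<And>\<omega>. \<omega> \<in> space M \<Longrightarrow>
        (\<forall>x. continuous (at_right x) (u \<omega>)) \<and> (\<forall>x. \<exists>l. (u \<omega> \<longlongrightarrow> l) (at_left x))"
    and mono: "\<And>\<omega>. \<omega> \<in> space M \<Longrightarrow> mono (u \<omega>)"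
    and zero: "\<And>\<omega>. \<omega> \<in> space M \<Longrightarrow> u \<omega> 0 = 0"
    and integ: "\<And>x. integrable M (\<lambda>\<omega>. u \<omega> x)"
    and cont_below: "\<And>fs f. (\<And>n. fs n \<in> Linfty M) \<Longrightarrow> f \<in> Linfty M \<Longrightarrow>
        (\<And>\<omega>. \<omega> \<in> space M \<Longrightarrow> incseq (\<lambda>n. fs n \<omega>)) \<Longrightarrow>
        (\<And>\<omega>. \<omega> \<in> space M \<Longrightarrow> (\<lambda>n. fs n \<omega>) \<longlonglongrightarrow> f \<omega>) \<Longrightarrow>
        (\<lambda>n. T_u M u (fs n)) \<longlonglongrightarrow> T_u M u f"
  shows "{\<omega> \<in> space M. continuous_on UNIV (u \<omega>)} \<in> sets M
    \<and> measure M {\<omega> \<in> space M. continuous_on UNIV (u \<omega>)} = 1"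
proof -
  interpret prob_space M by fact
  have rc: "\<And>\<omega> x. \<omega> \<in> space M \<Longrightarrow> continuous (at_right x) (u \<omega>)"
    and left: "\<And>\<omega> x. \<omega> \<in> space M \<Longrightarrow> \<exists>l. (u \<omega> \<longlongrightarrow> l) (at_left x)"
    and um: "\<And>x. (\<lambda>\<omega>. u \<omega> x) \<in> borel_measurable M"
    using rcll integ by auto
  define F where "F q N \<omega> = level_crossing (u \<omega>) (of_rat q) (real N)" for q N \<omega>
  define Q where "Q q N \<omega> \<longleftrightarrow> left_limit (u \<omega>) (F q N \<omega>) = u \<omega> (F q N \<omega>)" for q N \<omega>
  have F: "F q N \<in> Linfty M" for q N
    unfolding F_def by (rule level_crossing_in_Linfty[OF mono rc um of_nat_0_le_iff])
  then have F_meas: "F q N \<in> borel_measurable M" for q N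
    unfolding Linfty_def by blast
  have "AE \<omega> in M. \<forall>q N. Q q N \<omega>"
    unfolding Q_def AE_all_countable
    using AE_left_limit_compose_eq[OF rc left mono integ cont_below F] by blast
  moreover have [measurable]: "Measurable.pred M (Q q N)" for q N
    unfolding Q_def
    using borel_measurable_left_limit_compose[OF rc um F_meas]
      borel_measurable_compose_right_continuous[OF rc um F_meas]
    by measurable
  moreover have "{\<omega> \<in> space M. continuous_on UNIV (u \<omega>)} = {\<omega> \<in> space M. \<forall>q N. Q q N \<omega>}"
    using continuous_on_UNIV_iff_left_limit_at_level_crossings[OF mono rc left]
    unfolding Q_def F_def by auto
  ultimately show ?thesis
    by (simp add: prob_eq_1)
qed

end
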